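(* Let $\mathcal M_1=\langle W_1,\le_1,v_1,D_1,\phi_1\rangle$ and $\mathcal M_2=\langle W_2,\le_2,v_2,D_2,\phi_2\rangle$ be G-models for the same relational language, and let $Z$ be a CD-asimulation between $\mathcal M_1$ and $\mathcal M_2$. Let $A[x_1,\dots,x_k]$ be a formula whose free variables are among $x_1,\dots,x_k$, let $\{i,j\}=\{1,2\}$, $t\in W_i$, $\vec d\in D_i^k$, $u\in W_j$, $\vec e\in D_j^k$. If $(t,\vec d)\,Z\,(u,\vec e)$ and $t\Vdash_i A[\vec d]$, then $u\Vdash_j A[\vec e]$.
   Context: Formulas are built from atomic formulas $P x_{l_1}\dots x_{l_m}$ with $\wedge,\vee,\rightarrow,\perp,\forall,\exists$. A G-model is $\mathcal{M}=\langle W,\le,v_0,D,\phi\rangle$: $W$ a nonempty set of states, $\le$ a reflexive transitive relation on $W$, $v_0\in W$ with $v_0\le v$ for all $v\in W$, $D$ a nonempty domain, and for each $k$-ary predicate symbol $P$ a set $\phi(P)\subseteq W\times D^k$ that is monotone: if $v\le w$ and $\langle v,a_1,\dots,a_k\rangle\in\phi(P)$ then $\langle w,a_1,\dots,a_k\rangle\in\phi(P)$. Forcing $\Vdash$ between states and sentences with constants for elements of $D$: atomic $P\mathbf a_1\dots\mathbf a_k$ forced at $v$ iff $\langle v,a_1,\dots,a_k\rangle\in\phi(P)$; $\wedge,\vee$ pointwise; $v\Vdash A\rightarrow B$ iff for all $w\ge v$, $w\Vdash A$ implies $w\Vdash B$; $\perp$ never forced; $\exists x A$ (resp. $\forall xA$)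 forced at $v$ iff $A[\mathbf a/x]$ is forced at $v$ for some (resp. every) $a\in D$. $A[\vec d]$ denotes $A$ with $x_l$ replaced by the constant for $d_l$; $\Vdash_i$ is forcing in $\mathcal M_i$. A CD-asimulation between $\mathcal M_1$ and $\mathcal M_2$ is a relation $Z\subseteq\bigcup_{k\ge0}[(W_1\times D_1^k)\times(W_2\times D_2^k)]\cup[(W_2\times D_2^k)\times(W_1\times D_1^k)]$ such that for all $\{i,j\}=\{1,2\}$: (1) if $(v,\vec d)Z(w,\vec e)$ with $v\in W_i$, and $v\Vdash_i P[\vec d]$ for an atomic formula $P[\vec x]$ with free variables among $x_1,\dots,x_k$, then $w\Vdash_j P[\vec e]$; (2) if $(t,\vec d)Z(u,\vec e)$ with $t\in W_i$, $u\in W_j$, and $u\le_j v$, then there is $w\in W_i$ with $t\le_i w$, $(w,\vec d)Z(v,\vec e)$ and $(v,\vec e)Z(w,\vec d)$; (3) if $t\in W_i$, $(t,\vec d)Z(u,\vec e)$ and $f\in D_i$, then there is $g\in D_j$ with $(t,\vec d f)Z(u,\vec e g)$; (4) if $t\in W_i$, $(t,\vec d)Z(u,\vec e)$ and $g\in D_j$, then there is $f\in D_i$ with $(t,\vec d f)Z(u,\vec e g)$. Here $\vec d f$ denotes the sequence $\vec d$ extended by $f$. *)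

theory Defs
  imports Main
begin

(* First-order formulas over predicate symbols 'p.  Variables are x_0, x_1, ...
   (indexed by nat); Atom P [l1,...,lm] is the atomic formula P x_l1 ... x_lm. *)
datatype 'p fm =
    Atom 'p "nat list"
  | Conj "'p fm" "'p fm"
  | Disj "'p fm" "'p fm"
  | Imp "'p fm" "'p fm"
  | Bot
  | All nat "'p fm"
  | Ex nat "'p fm"

fun fv :: "'p fm \<Rightarrow> nat set" where
  "fv (Atom P ls) = set ls"
| "fv (Conj A B) = fv A \<union> fv B"
| "fv (Disj A B) = fv A \<union> fv B"
| "fv (Imp A B) = fv A \<union> fv B"
| "fv Bot = {}"
| "fv (All x A) = fv A - {x}"
| "fv (Ex x A) = fv A - {x}"

fun wf_fm :: "('p \<Rightarrow> nat) \<Rightarrow> 'p fm \<Rightarrow> bool" where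
  "wf_fm ar (Atom P ls) = (length ls = ar P)"
| "wf_fm ar (Conj A B) = (wf_fm ar A \<and> wf_fm ar B)"
| "wf_fm ar (Disj A B) = (wf_fm ar A \<and> wf_fm ar B)"
| "wf_fm ar (Imp A B) = (wf_fm ar A \<and> wf_fm ar B)"
| "wf_fm ar Bot = True"
| "wf_fm ar (All x A) = wf_fm ar A"
| "wf_fm ar (Ex x A) = wf_fm ar A"

(* G-model <W, \<le>, v0, D, \<phi>>; \<phi> P is the set of (v, [a1..ak]) in W \<times> D^k *)
record ('w, 'd, 'p) gmodel =
  W :: "'w set"
  le :: "'w \<Rightarrow> 'w \<Rightarrow> bool"
  root :: 'w
  Dom :: "'d set"
  phi :: "'p \<Rightarrow> 'w \<Rightarrow> 'd list \<Rightarrow> bool"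

definition is_gmodel :: "('p \<Rightarrow> nat) \<Rightarrow> ('w, 'd, 'p) gmodel \<Rightarrow> bool" where
  "is_gmodel ar M \<longleftrightarrow>
     W M \<noteq> {} \<and>
     (\<forall>v w. le M v w \<longrightarrow> v \<in> W M \<and> w \<in> W M) \<and>
     (\<forall>v\<in>W M. le M v v) \<and>
     (\<forall>u\<in>W M. \<forall>v\<in>W M. \<forall>w\<in>W M. le M u v \<longrightarrow> le M v w \<longrightarrow> le M u w) \<and>
     root M \<in> W M \<and> (\<forall>v\<in>W M. le M (root M) v) \<and>
     Dom M \<noteq> {} \<and>
     (\<forall>P v ds. phi M P v ds \<longrightarrow> v \<in> W M \<and> set ds \<subseteq> Dom M \<and> length ds = ar P) \<and>
     (\<forall>P v w ds. le M v w \<longrightarrow> phi M P v ds \<longrightarrow> phi M P w ds)"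

(* Forcing.  A sentence A[d] with constants is represented by A together with the
   assignment \<sigma> of domain elements to its free variables. *)
fun force :: "('w, 'd, 'p) gmodel \<Rightarrow> 'w \<Rightarrow> (nat \<Rightarrow> 'd) \<Rightarrow> 'p fm \<Rightarrow> bool" where
  "force M v \<sigma> (Atom P ls) = phi M P v (map \<sigma> ls)"
| "force M v \<sigma> (Conj A B) = (force M v \<sigma> A \<and> force M v \<sigma> B)"
| "force M v \<sigma> (Disj A B) = (force M v \<sigma> A \<or> force M v \<sigma> B)"
| "force M v \<sigma> (Imp A B) =
     (\<forall>w\<in>W M. le M v w \<longrightarrow> force M w \<sigma> A \<longrightarrow> force M w \<sigma> B)"
| "force M v \<sigma> Bot = False"
| "force M v \<sigma> (All x A) = (\<forall>a\<in>Dom M. force M v (\<sigma>(x := a)) A)"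
| "force M v \<sigma> (Ex x A) = (\<exists>a\<in>Dom M. force M v (\<sigma>(x := a)) A)"

(* v \<Vdash> A[d1,...,dk]: x_l is interpreted by the l-th entry of ds (0-indexed) *)
definition forces :: "('w, 'd, 'p) gmodel \<Rightarrow> 'w \<Rightarrow> 'p fm \<Rightarrow> 'd list \<Rightarrow> bool" where
  "forces M v A ds = force M v (\<lambda>l. ds ! l) A"

(* The clauses (1)-(4) of a CD-asimulation for one fixed ordered pair (i,j).
   Zij relates (W_i \<times> D_i^k) to (W_j \<times> D_j^k), Zji the reverse direction. *)
definition asim_half ::
  "('p \<Rightarrow> nat) \<Rightarrow> ('w1, 'd1, 'p) gmodel \<Rightarrow> ('w2, 'd2, 'p) gmodel
   \<Rightarrow> ('w1 \<Rightarrow> 'd1 list \<Rightarrow> 'w2 \<Rightarrow> 'd2 list \<Rightarrow> bool)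
   \<Rightarrow> ('w2 \<Rightarrow> 'd2 list \<Rightarrow> 'w1 \<Rightarrow> 'd1 list \<Rightarrow> bool) \<Rightarrow> bool" where
  "asim_half ar Mi Mj Zij Zji \<longleftrightarrow>
     (\<forall>t ds u es. Zij t ds u es \<longrightarrow>
        t \<in> W Mi \<and> set ds \<subseteq> Dom Mi \<and> u \<in> W Mj \<and> set es \<subseteq> Dom Mj
        \<and> length ds = length es) \<and>
     \<comment> \<open>(1)\<close>
     (\<forall>v ds w es P ls. Zij v ds w es \<longrightarrow> wf_fm ar (Atom P ls) \<longrightarrow>
        fv (Atom P ls) \<subseteq> {..<length ds} \<longrightarrow>
        forces Mi v (Atom P ls) ds \<longrightarrow> forces Mj w (Atom P ls) es) \<and>
     \<comment> \<open>(2)\<close>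
     (\<forall>t ds u es v. Zij t ds u es \<longrightarrow> v \<in> W Mj \<longrightarrow> le Mj u v \<longrightarrow>
        (\<exists>w\<in>W Mi. le Mi t w \<and> Zij w ds v es \<and> Zji v es w ds)) \<and>
     \<comment> \<open>(3)\<close>
     (\<forall>t ds u es f. Zij t ds u es \<longrightarrow> f \<in> Dom Mi \<longrightarrow>
        (\<exists>g\<in>Dom Mj. Zij t (ds @ [f]) u (es @ [g]))) \<and>
     \<comment> \<open>(4)\<close>
     (\<forall>t ds u es g. Zij t ds u es \<longrightarrow> g \<in> Dom Mj \<longrightarrow>
        (\<exists>f\<in>Dom Mi. Zij t (ds @ [f]) u (es @ [g])))"

(* Z = Z12 \<union> Z21 is a CD-asimulation between M1 and M2 *)
definition cd_asimulation ::
  "('p \<Rightarrow> nat) \<Rightarrow> ('w1, 'd1, 'p) gmodel \<Rightarrow> ('w2, 'd2, 'p) gmodel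
   \<Rightarrow> ('w1 \<Rightarrow> 'd1 list \<Rightarrow> 'w2 \<Rightarrow> 'd2 list \<Rightarrow> bool)
   \<Rightarrow> ('w2 \<Rightarrow> 'd2 list \<Rightarrow> 'w1 \<Rightarrow> 'd1 list \<Rightarrow> bool) \<Rightarrow> bool" where
  "cd_asimulation ar M1 M2 Z12 Z21 \<longleftrightarrow>
     asim_half ar M1 M2 Z12 Z21 \<and> asim_half ar M2 M1 Z21 Z12"

end

theory Submission
  imports Defs
begin

text \<open>Induction on the formula, proving preservation in both directions at once: in the
  implication case, clause (2) gives for \<open>v \<ge> u\<close> a \<open>w \<ge> t\<close> related to \<open>v\<close> both ways, so the
  antecedent is carried back from \<open>v\<close> to \<open>w\<close> and the consequent forward from \<open>w\<close> to \<open>v\<close>;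
  clauses (3) and (4) extend the related tuples for the quantifiers. Under a quantifier the
  free variables no longer coincide with tuple positions, so the induction is over assignments
  reading each free variable \<open>y\<close> from position \<open>\<pi> y\<close>, the bound variable being read from
  the newly appended position.\<close>

definition reads :: "nat set \<Rightarrow> (nat \<Rightarrow> nat) \<Rightarrow> 'd list \<Rightarrow> (nat \<Rightarrow> 'd) \<Rightarrow> bool" where
  "reads X \<pi> ds \<sigma> \<longleftrightarrow> (\<forall>y\<in>X. \<pi> y < length ds \<and> \<sigma> y = ds ! \<pi> y)"

lemma reads_subset: "reads Y \<pi> ds \<sigma> \<Longrightarrow> X \<subseteq> Y \<Longrightarrow> reads X \<pi> ds \<sigma>"
  unfolding reads_def by blast

lemma reads_Un: "reads (X \<union> Y) \<pi> ds \<sigma> \<longleftrightarrow> reads X \<pi> ds \<sigma> \<and> reads Y \<pi> ds \<sigma>"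
  unfolding reads_def by blast

lemma reads_snoc:
  "reads (X - {x}) \<pi> ds \<sigma> \<Longrightarrow> reads X (\<pi>(x := length ds)) (ds @ [a]) (\<sigma>(x := a))"
  unfolding reads_def by (auto simp: nth_append)

lemma reads_atom_args: "reads (set ls) \<pi> ds \<sigma> \<Longrightarrow> map \<sigma> ls = map ((!) ds) (map \<pi> ls)"
  unfolding reads_def by simp

definition preserves ::
  "('wi, 'di, 'p) gmodel \<Rightarrow> ('wj, 'dj, 'p) gmodel
   \<Rightarrow> ('wi \<Rightarrow> 'di list \<Rightarrow> 'wj \<Rightarrow> 'dj list \<Rightarrow> bool) \<Rightarrow> 'p fm \<Rightarrow> bool" where
  "preserves Mi Mj Z A \<longleftrightarrow>
     (\<forall>t ds u es \<pi> \<sigma> \<tau>. Z t ds u es \<longrightarrow> reads (fv A) \<pi> ds \<sigma> \<longrightarrow> reads (fv A) \<pi> es \<tau> \<longrightarrow>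
        force Mi t \<sigma> A \<longrightarrow> force Mj u \<tau> A)"

lemma preservesI:
  assumes "\<And>t ds u es \<pi> \<sigma> \<tau>. Z t ds u es \<Longrightarrow> reads (fv A) \<pi> ds \<sigma> \<Longrightarrow> reads (fv A) \<pi> es \<tau>
             \<Longrightarrow> force Mi t \<sigma> A \<Longrightarrow> force Mj u \<tau> A"
  shows "preserves Mi Mj Z A"
  using assms unfolding preserves_def by blast

lemma preservesD:
  "preserves Mi Mj Z A \<Longrightarrow> Z t ds u es \<Longrightarrow> reads (fv A) \<pi> ds \<sigma> \<Longrightarrow> reads (fv A) \<pi> es \<tau>
   \<Longrightarrow> force Mi t \<sigma> A \<Longrightarrow> force Mj u \<tau> A"
  unfolding preserves_def by blast

context
  fixes ar Mi Mj Zij Zji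
  assumes Z: "asim_half ar Mi Mj Zij Zji"
begin

lemma asim_half_length: "Zij t ds u es \<Longrightarrow> length ds = length es"
  using Z unfolding asim_half_def by meson

lemma asim_half_atom:
  "Zij t ds u es \<Longrightarrow> wf_fm ar (Atom P ls) \<Longrightarrow> fv (Atom P ls) \<subseteq> {..<length ds}
   \<Longrightarrow> forces Mi t (Atom P ls) ds \<Longrightarrow> forces Mj u (Atom P ls) es"
  using Z unfolding asim_half_def by meson

lemma asim_half_back:
  assumes "Zij t ds u es" and "v \<in> W Mj" and "le Mj u v"
  obtains w where "w \<in> W Mi" "le Mi t w" "Zij w ds v es" "Zji v es w ds"
  using Z assms unfolding asim_half_def by meson

lemma asim_half_extend:
  assumes "Zij t ds u es" and "f \<in> Dom Mi"
  obtains g where "g \<in> Dom Mj" "Zij t (ds @ [f]) u (es @ [g])"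
  using Z assms unfolding asim_half_def by meson

lemma asim_half_extend_back:
  assumes "Zij t ds u es" and "g \<in> Dom Mj"
  obtains f where "f \<in> Dom Mi" "Zij t (ds @ [f]) u (es @ [g])"
  using Z assms unfolding asim_half_def by meson

end

lemma preserves_Atom:
  assumes Z: "asim_half ar Mi Mj Zij Zji" and wf: "wf_fm ar (Atom P ls)"
  shows "preserves Mi Mj Zij (Atom P ls)"
proof (rule preservesI)
  fix t ds u es \<pi> \<sigma> \<tau>
  assume tu: "Zij t ds u es" and \<sigma>: "reads (fv (Atom P ls)) \<pi> ds \<sigma>"
    and \<tau>: "reads (fv (Atom P ls)) \<pi> es \<tau>" and t: "force Mi t \<sigma> (Atom P ls)"
  have args: "map \<sigma> ls = map ((!) ds) (map \<pi> ls)" "map \<tau> ls = map ((!) es) (map \<pi> ls)"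
    using reads_atom_args \<sigma> \<tau> by simp_all
  have "forces Mi t (Atom P (map \<pi> ls)) ds"
    using t by (simp only: forces_def force.simps args)
  moreover have "fv (Atom P (map \<pi> ls)) \<subseteq> {..<length ds}"
    using \<sigma> by (auto simp: reads_def)
  ultimately have "forces Mj u (Atom P (map \<pi> ls)) es"
    using asim_half_atom[OF Z tu] wf by simp
  then show "force Mj u \<tau> (Atom P ls)"
    by (simp only: forces_def force.simps args)
qed

lemma preserves_Bot: "preserves Mi Mj Z Bot"
  unfolding preserves_def by simp

lemma preserves_Conj:
  "preserves Mi Mj Z A \<Longrightarrow> preserves Mi Mj Z B \<Longrightarrow> preserves Mi Mj Z (Conj A B)"
  unfolding preserves_def by (simp add: reads_Un) blast

lemma preserves_Disj:
  "preserves Mi Mj Z A \<Longrightarrow> preserves Mi Mj Z B \<Longrightarrow> preserves Mi Mj Z (Disj A B)"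
  unfolding preserves_def by (simp add: reads_Un) blast

lemma preserves_Imp:
  assumes Z: "asim_half ar Mi Mj Zij Zji"
    and A: "preserves Mj Mi Zji A" and B: "preserves Mi Mj Zij B"
  shows "preserves Mi Mj Zij (Imp A B)"
proof (rule preservesI)
  fix t ds u es \<pi> \<sigma> \<tau>
  assume tu: "Zij t ds u es" and \<sigma>: "reads (fv (Imp A B)) \<pi> ds \<sigma>"
    and \<tau>: "reads (fv (Imp A B)) \<pi> es \<tau>" and t: "force Mi t \<sigma> (Imp A B)"
  show "force Mj u \<tau> (Imp A B)"
  proof (simp, intro ballI impI)
    fix v assume v: "v \<in> W Mj" "le Mj u v" and vA: "force Mj v \<tau> A"
    obtain w where w: "w \<in> W Mi" "le Mi t w" and wv: "Zij w ds v es" and vw: "Zji v es w ds"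
      using asim_half_back[OF Z tu v] .
    have "force Mi w \<sigma> A"
      using preservesD[OF A vw] \<sigma> \<tau> vA by (auto intro: reads_subset)
    then have "force Mi w \<sigma> B"
      using t w by simp
    then show "force Mj v \<tau> B"
      using preservesD[OF B wv] \<sigma> \<tau> by (auto intro: reads_subset)
  qed
qed

lemma preserves_All:
  assumes Z: "asim_half ar Mi Mj Zij Zji" and A: "preserves Mi Mj Zij A"
  shows "preserves Mi Mj Zij (All x A)"
proof (rule preservesI)
  fix t ds u es \<pi> \<sigma> \<tau>
  assume tu: "Zij t ds u es" and \<sigma>: "reads (fv (All x A)) \<pi> ds \<sigma>"
    and \<tau>: "reads (fv (All x A)) \<pi> es \<tau>" and t: "force Mi t \<sigma> (All x A)"
  have len: "length ds = length es"
    using asim_half_length[OF Z tu] .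
  show "force Mj u \<tau> (All x A)"
  proof (simp, intro ballI)
    fix g assume "g \<in> Dom Mj"
    then obtain f where f: "f \<in> Dom Mi" and tu': "Zij t (ds @ [f]) u (es @ [g])"
      using asim_half_extend_back[OF Z tu] by blast
    have "reads (fv A) (\<pi>(x := length ds)) (ds @ [f]) (\<sigma>(x := f))"
      using reads_snoc \<sigma> by simp
    moreover have "reads (fv A) (\<pi>(x := length ds)) (es @ [g]) (\<tau>(x := g))"
      using reads_snoc \<tau> len by simp
    ultimately show "force Mj u (\<tau>(x := g)) A"
      using preservesD[OF A tu'] t f by simp
  qed
qed

lemma preserves_Ex:
  assumes Z: "asim_half ar Mi Mj Zij Zji" and A: "preserves Mi Mj Zij A"
  shows "preserves Mi Mj Zij (Ex x A)"
proof (rule preservesI)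
  fix t ds u es \<pi> \<sigma> \<tau>
  assume tu: "Zij t ds u es" and \<sigma>: "reads (fv (Ex x A)) \<pi> ds \<sigma>"
    and \<tau>: "reads (fv (Ex x A)) \<pi> es \<tau>" and t: "force Mi t \<sigma> (Ex x A)"
  have len: "length ds = length es"
    using asim_half_length[OF Z tu] .
  obtain f where "f \<in> Dom Mi" and tf: "force Mi t (\<sigma>(x := f)) A"
    using t by auto
  then obtain g where g: "g \<in> Dom Mj" and tu': "Zij t (ds @ [f]) u (es @ [g])"
    using asim_half_extend[OF Z tu] by blast
  have "reads (fv A) (\<pi>(x := length ds)) (ds @ [f]) (\<sigma>(x := f))"
    using reads_snoc \<sigma> by simp
  moreover have "reads (fv A) (\<pi>(x := length ds)) (es @ [g]) (\<tau>(x := g))"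
    using reads_snoc \<tau> len by simp
  ultimately have "force Mj u (\<tau>(x := g)) A"
    using preservesD[OF A tu'] tf by simp
  then show "force Mj u \<tau> (Ex x A)"
    using g by auto
qed

lemma cd_asimulation_preserves:
  assumes "cd_asimulation ar M1 M2 Z12 Z21" and "wf_fm ar A"
  shows "preserves M1 M2 Z12 A \<and> preserves M2 M1 Z21 A"
proof -
  have Z12: "asim_half ar M1 M2 Z12 Z21" and Z21: "asim_half ar M2 M1 Z21 Z12"
    using assms(1) unfolding cd_asimulation_def by auto
  show ?thesis
    using assms(2)
    by (induction A)
      (auto intro: preserves_Atom[OF Z12] preserves_Atom[OF Z21] preserves_Bot
        preserves_Conj preserves_Disj preserves_Imp[OF Z12] preserves_Imp[OF Z21]
        preserves_All[OF Z12] preserves_All[OF Z21] preserves_Ex[OF Z12] preserves_Ex[OF Z21])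
qed

lemma preserves_forces:
  assumes "preserves Mi Mj Z A" and "fv A \<subseteq> {..<k}" and "length ds = k" and "length es = k"
    and "Z t ds u es" and "forces Mi t A ds"
  shows "forces Mj u A es"
proof -
  have "reads (fv A) id ds ((!) ds)" and "reads (fv A) id es ((!) es)"
    using assms(2-4) unfolding reads_def by auto
  then show ?thesis
    using preservesD[OF assms(1,5)] assms(6) unfolding forces_def by blast
qed

theorem lemma4p1:
  fixes ar :: "'p \<Rightarrow> nat"
    and M1 :: "('w1, 'd1, 'p) gmodel" and M2 :: "('w2, 'd2, 'p) gmodel"
    and Z12 :: "'w1 \<Rightarrow> 'd1 list \<Rightarrow> 'w2 \<Rightarrow> 'd2 list \<Rightarrow> bool"
    and Z21 :: "'w2 \<Rightarrow> 'd2 list \<Rightarrow> 'w1 \<Rightarrow> 'd1 list \<Rightarrow> bool"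
    and A :: "'p fm" and k :: nat
  assumes "is_gmodel ar M1" and "is_gmodel ar M2"
    and "cd_asimulation ar M1 M2 Z12 Z21"
    and "wf_fm ar A" and "fv A \<subseteq> {..<k}"
  shows "(\<forall>t ds u es. t \<in> W M1 \<longrightarrow> set ds \<subseteq> Dom M1 \<longrightarrow> length ds = k \<longrightarrow>
             u \<in> W M2 \<longrightarrow> set es \<subseteq> Dom M2 \<longrightarrow> length es = k \<longrightarrow>
             Z12 t ds u es \<longrightarrow> forces M1 t A ds \<longrightarrow> forces M2 u A es)
       \<and> (\<forall>t es u ds. t \<in> W M2 \<longrightarrow> set es \<subseteq> Dom M2 \<longrightarrow> length es = k \<longrightarrow>
             u \<in> W M1 \<longrightarrow> set ds \<subseteq> Dom M1 \<longrightarrow> length ds = k \<longrightarrow>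
             Z21 t es u ds \<longrightarrow> forces M2 t A es \<longrightarrow> forces M1 u A ds)"
proof -
  have p12: "preserves M1 M2 Z12 A" and p21: "preserves M2 M1 Z21 A"
    using cd_asimulation_preserves[OF assms(3,4)] by auto
  show ?thesis
    using preserves_forces[OF p12 assms(5)] preserves_forces[OF p21 assms(5)] by blast
qed

end
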